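(* For all integers $n\ge0$, $\overline{bt}(9n+6)\equiv 0\pmod 3$.
   Context: For $|q|<1$ and a positive integer $k$ let $f_k:=\prod_{m=1}^\infty(1-q^{mk})$. The function $\overline{bt}(n)$ is defined by $\sum_{n\ge0}\overline{bt}(n)q^n=\frac{f_4^3}{f_1^6f_2^3}$. *)

theory Defs
  imports "HOL-Computational_Algebra.Formal_Power_Series"
begin

definition euler_trunc :: "nat \<Rightarrow> nat \<Rightarrow> rat fps" where
  "euler_trunc k N = (\<Prod>m\<in>{1..N}. 1 - fps_X ^ (m * k))"

text \<open>f_k = prod_{m>=1} (1 - q^(m k)) as a formal power series (k >= 1):
  the n-th coefficient of the infinite product equals the n-th coefficient
  of the product over m = 1..n, since the later factors are 1 + O(q^(n+1)).\<close>
definition f_eta :: "nat \<Rightarrow> rat fps" where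
  "f_eta k = Abs_fps (\<lambda>n. fps_nth (euler_trunc k n) n)"

definition bt_gf :: "rat fps" where
  "bt_gf = f_eta 4 ^ 3 / (f_eta 1 ^ 6 * f_eta 2 ^ 3)"

definition bt_bar :: "nat \<Rightarrow> rat" where
  "bt_bar n = fps_nth bt_gf n"

end

(*
  Write b for the generating function bt_gf. Its denominator f_1^6 f_2^3 has constant term 1,
  so b has integer coefficients, and it suffices to show that the reduction of b modulo 3
  vanishes at the exponents 9n+6. In characteristic 3 the Frobenius gives f_k^3 = f_(3k), so
  b f_3^2 f_6 = f_12. Let E = prod_(m>=1) (1 + q^(3(2m-1))); then E f_3 f_12 = f_6^2, and
  multiplying both b f_18^2 and E^2 f_6 f_36 by f_3^2 f_6 gives f_6^6 f_12, whence

    b f_18^2 = E^2 f_6 f_36.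

  Here E^2 f_6 = phi(q^3) for Gauss's theta function phi(q) = sum_(s in Z) q^(s^2); all we need
  is that its exponents are of the form 3 s^2, which follows from a finite version of Jacobi's
  triple product derived from the q-binomial theorem. Since 3 s^2 + 36 t = 9 n + 6 would force
  s^2 = 2 (mod 3), the right-hand side vanishes at 9n+6, and because f_18^2 is a series in q^18
  with constant term 1, so does b.
*)
theory Submission
  imports Defs "HOL-Computational_Algebra.Primes" "HOL-Library.Numeral_Type"
begin

unbundle fps_syntax

definition fps_agree :: "nat \<Rightarrow> 'a::zero fps \<Rightarrow> 'a fps \<Rightarrow> bool" where
  "fps_agree n f g \<longleftrightarrow> (\<forall>i\<le>n. f $ i = g $ i)"

lemma fps_agree_refl [simp]: "fps_agree n f f"
  by (simp add: fps_agree_def)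

lemma fps_agree_sym: "fps_agree n f g \<Longrightarrow> fps_agree n g f"
  by (simp add: fps_agree_def)

lemma fps_agree_nth: "fps_agree n f g \<Longrightarrow> f $ n = g $ n"
  by (simp add: fps_agree_def)

lemma fps_agree_mono: "fps_agree N f g \<Longrightarrow> n \<le> N \<Longrightarrow> fps_agree n f g"
  by (simp add: fps_agree_def)

lemma fps_agree_mult:
  fixes f f' g g' :: "'a::comm_semiring_1 fps"
  shows "fps_agree n f f' \<Longrightarrow> fps_agree n g g' \<Longrightarrow> fps_agree n (f * g) (f' * g')"
  unfolding fps_agree_def fps_mult_nth by (auto intro!: sum.cong)

lemma fps_agree_power:
  fixes f g :: "'a::comm_semiring_1 fps"
  shows "fps_agree n f g \<Longrightarrow> fps_agree n (f ^ m) (g ^ m)"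
  by (induction m) (auto intro: fps_agree_mult)

lemma fps_agree_mult_cancel:
  fixes f g u :: "'a::comm_ring_1 fps"
  assumes "fps_agree n (f * u) (g * u)" and "u $ 0 = 1"
  shows "fps_agree n f g"
proof -
  have "u * fps_right_inverse u 1 = 1"
    using assms(2) by (intro fps_right_inverse) simp
  then show ?thesis
    using fps_agree_mult[OF assms(1) fps_agree_refl[of n "fps_right_inverse u 1"]]
    by (simp add: mult.assoc)
qed

lemma fps_mult_right_cancel_unit:
  fixes f g u :: "'a::comm_ring_1 fps"
  assumes "f * u = g * u" and "u $ 0 = 1"
  shows "f = g"
proof (rule fps_ext)
  fix n
  have "fps_agree n f g"
    using assms by (intro fps_agree_mult_cancel[of n f u g]) simp_all
  then show "f $ n = g $ n" by (rule fps_agree_nth)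
qed

lemma fps_X_power_mult_left_cancel:
  fixes f g :: "'a::comm_ring_1 fps"
  assumes "fps_X ^ c * f = fps_X ^ c * g"
  shows "f = g"
proof (rule fps_ext)
  fix n
  show "f $ n = g $ n"
    using arg_cong[OF assms, of "\<lambda>h. h $ (n + c)"] by (simp add: fps_X_power_mult_nth)
qed

lemma fps_mult_nth_nonzero:
  fixes f g :: "'a::semiring_0 fps"
  assumes "(f * g) $ n \<noteq> 0"
  obtains i j where "i + j = n" "f $ i \<noteq> 0" "g $ j \<noteq> 0"
proof -
  from assms obtain i where "i \<le> n" "f $ i * g $ (n - i) \<noteq> 0"
    unfolding fps_mult_nth by (meson atLeastAtMost_iff sum.neutral)
  then show ?thesis by (intro that[of i "n - i"]) auto
qed

definition fps_support_dvd :: "nat \<Rightarrow> 'a::zero fps \<Rightarrow> bool" where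
  "fps_support_dvd d f \<longleftrightarrow> (\<forall>n. f $ n \<noteq> 0 \<longrightarrow> d dvd n)"

lemma fps_support_dvd_one [simp]: "fps_support_dvd d 1"
  by (simp add: fps_support_dvd_def)

lemma fps_support_dvd_mult:
  fixes f g :: "'a::comm_semiring_1 fps"
  assumes "fps_support_dvd d f" and "fps_support_dvd d g"
  shows "fps_support_dvd d (f * g)"
  unfolding fps_support_dvd_def
proof (intro allI impI)
  fix n assume "(f * g) $ n \<noteq> 0"
  then obtain i j where "i + j = n" "f $ i \<noteq> 0" "g $ j \<noteq> 0"
    by (rule fps_mult_nth_nonzero)
  with assms show "d dvd n" by (auto simp: fps_support_dvd_def)
qed

lemma fps_support_dvd_power:
  fixes f :: "'a::comm_semiring_1 fps"
  shows "fps_support_dvd d f \<Longrightarrow> fps_support_dvd d (f ^ m)"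
  by (induction m) (auto intro: fps_support_dvd_mult)

lemma fps_support_dvd_prod:
  fixes g :: "'b \<Rightarrow> 'a::comm_semiring_1 fps"
  shows "(\<And>m. m \<in> A \<Longrightarrow> fps_support_dvd d (g m)) \<Longrightarrow> fps_support_dvd d (\<Prod>m\<in>A. g m)"
  by (induction A rule: infinite_finite_induct) (auto intro: fps_support_dvd_mult)

lemma fps_support_dvd_dvd_trans: "fps_support_dvd d f \<Longrightarrow> e dvd d \<Longrightarrow> fps_support_dvd e f"
  by (auto simp: fps_support_dvd_def intro: dvd_trans)

lemma fps_nth_arith_prog_eq_0:
  fixes f u :: "'a::comm_ring_1 fps"
  assumes "u $ 0 = 1" and "fps_support_dvd d u" and "r < d" and "\<And>m. (f * u) $ (d * m + r) = 0"
  shows "f $ (d * m + r) = 0"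
proof (induction m rule: less_induct)
  case (less m)
  define N where "N = d * m + r"
  have "(f * u) $ N = f $ N + (\<Sum>i<N. f $ i * u $ (N - i))"
    using assms(1) by (simp add: fps_mult_nth atLeast0AtMost lessThan_Suc_atMost[symmetric] add.commute)
  moreover have "f $ i * u $ (N - i) = 0" if "i < N" for i
  proof (cases "u $ (N - i) = 0")
    case False
    with assms(2) obtain t where t: "N - i = d * t" by (auto simp: fps_support_dvd_def)
    with that have "t \<ge> 1" by (cases t) (simp_all add: N_def)
    have "d * t < d * Suc m" using t assms(3) unfolding N_def by simp
    then have "t \<le> m" by (simp only: mult_less_cancel1) simp
    then have "i = d * (m - t) + r"
      using t that unfolding N_def by (simp add: diff_mult_distrib2)
    moreover have "m - t < m" using \<open>t \<ge> 1\<close> \<open>t \<le> m\<close> by simp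
    ultimately show ?thesis using less by simp
  qed simp
  ultimately show ?case using assms(4)[of m] by (simp add: N_def)
qed

definition fps_map :: "('a \<Rightarrow> 'b) \<Rightarrow> 'a fps \<Rightarrow> 'b fps" where
  "fps_map h f = Abs_fps (\<lambda>n. h (f $ n))"

lemma fps_map_nth [simp]: "fps_map h f $ n = h (f $ n)"
  by (simp add: fps_map_def)

lemma fps_map_of_int_one [simp]: "fps_map of_int 1 = (1 :: 'a::ring_1 fps)"
  by (rule fps_ext) simp

lemma fps_map_of_int_X [simp]: "fps_map of_int fps_X = (fps_X :: 'a::ring_1 fps)"
  by (rule fps_ext) simp

lemma fps_map_of_int_diff [simp]: "fps_map of_int (f - g) = (fps_map of_int f - fps_map of_int g :: 'a::ring_1 fps)"
  by (rule fps_ext) simp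

lemma fps_map_of_int_mult [simp]:
  "fps_map of_int (f * g) = (fps_map of_int f * fps_map of_int g :: 'a::comm_ring_1 fps)"
  by (rule fps_ext) (simp add: fps_mult_nth)

lemma fps_map_of_int_power [simp]:
  "fps_map of_int (f ^ n) = (fps_map of_int f ^ n :: 'a::comm_ring_1 fps)"
  by (induction n) simp_all

lemma fps_map_of_int_prod [simp]:
  "fps_map of_int (\<Prod>m\<in>A. g m) = (\<Prod>m\<in>A. fps_map of_int (g m) :: 'a::comm_ring_1 fps)"
  by (induction A rule: infinite_finite_induct) simp_all

section \<open>Infinite products\<close>

(* The diagonal coefficients are the coefficients of the infinite product only when the
   m-th factor is 1 + O(X^m); see fps_infprod_agree. *)
definition fps_infprod :: "(nat \<Rightarrow> 'a::comm_ring_1 fps) \<Rightarrow> 'a fps" where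
  "fps_infprod g = Abs_fps (\<lambda>n. (\<Prod>m\<in>{1..n}. g m) $ n)"

lemma fps_agree_partial_prod:
  assumes "\<And>m. fps_agree m (g (Suc m)) 1" and "n \<le> N"
  shows "fps_agree n (\<Prod>m\<in>{1..N}. g m) (\<Prod>m\<in>{1..n}. g m)"
  using assms(2)
proof (induction N)
  case (Suc N)
  show ?case
  proof (cases "n = Suc N")
    case False
    with Suc.prems have "n \<le> N" by simp
    moreover have "fps_agree n (g (Suc N)) 1"
      using assms(1) \<open>n \<le> N\<close> by (rule fps_agree_mono)
    ultimately have "fps_agree n ((\<Prod>m\<in>{1..N}. g m) * g (Suc N)) ((\<Prod>m\<in>{1..n}. g m) * 1)"
      using Suc.IH by (intro fps_agree_mult)
    then show ?thesis by (simp add: prod.nat_ivl_Suc')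
  qed simp
qed simp

lemma fps_infprod_agree:
  assumes "\<And>m. fps_agree m (g (Suc m)) 1" and "n \<le> N"
  shows "fps_agree n (fps_infprod g) (\<Prod>m\<in>{1..N}. g m)"
  unfolding fps_agree_def
proof (intro allI impI)
  fix i assume "i \<le> n"
  then have "fps_agree i (\<Prod>m\<in>{1..N}. g m) (\<Prod>m\<in>{1..i}. g m)"
    using assms by (intro fps_agree_partial_prod) auto
  then show "fps_infprod g $ i = (\<Prod>m\<in>{1..N}. g m) $ i"
    by (simp add: fps_infprod_def fps_agree_def)
qed

lemma fps_map_of_int_infprod:
  "fps_map of_int (fps_infprod g) = (fps_infprod (\<lambda>m. fps_map of_int (g m)) :: 'a::comm_ring_1 fps)"
proof (rule fps_ext)
  fix n
  have "of_int ((\<Prod>m\<in>{1..n}. g m) $ n) = (\<Prod>m\<in>{1..n}. fps_map of_int (g m) :: 'a fps) $ n"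
    by (simp flip: fps_map_of_int_prod)
  then show "fps_map of_int (fps_infprod g) $ n = (fps_infprod (\<lambda>m. fps_map of_int (g m)) :: 'a fps) $ n"
    by (simp add: fps_infprod_def)
qed

definition euler_fps :: "nat \<Rightarrow> 'a::comm_ring_1 fps" where
  "euler_fps k = fps_infprod (\<lambda>m. 1 - fps_X ^ (m * k))"

lemma f_eta_eq_euler_fps: "f_eta k = euler_fps k"
  by (simp add: f_eta_def euler_trunc_def euler_fps_def fps_infprod_def)

lemma euler_fps_agree:
  assumes "k \<ge> 1" and "n \<le> N"
  shows "fps_agree n (euler_fps k) (\<Prod>m\<in>{1..N}. 1 - fps_X ^ (m * k))"
  unfolding euler_fps_def
proof (rule fps_infprod_agree[OF _ assms(2)])
  fix m
  have "i \<le> i * k" for i :: nat using assms(1) by simp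
  from this[of "Suc m"] have "m < Suc m * k" by simp
  then show "fps_agree m (1 - fps_X ^ (Suc m * k)) (1 :: 'a fps)"
    by (auto simp: fps_agree_def)
qed

lemma euler_fps_nth_0: "k \<ge> 1 \<Longrightarrow> euler_fps k $ 0 = 1"
  using euler_fps_agree[of k 0 0] by (simp add: fps_agree_def)

lemma fps_support_dvd_euler_fps:
  assumes "k \<ge> 1"
  shows "fps_support_dvd k (euler_fps k :: 'a::comm_ring_1 fps)"
  unfolding fps_support_dvd_def
proof (intro allI impI)
  fix n assume "euler_fps k $ n \<noteq> (0::'a)"
  moreover have "euler_fps k $ n = (\<Prod>m\<in>{1..n}. 1 - fps_X ^ (m * k) :: 'a fps) $ n"
    by (rule fps_agree_nth[OF euler_fps_agree[OF assms order_refl]])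
  moreover have "fps_support_dvd k (\<Prod>m\<in>{1..n}. 1 - fps_X ^ (m * k) :: 'a fps)"
    by (intro fps_support_dvd_prod) (auto simp: fps_support_dvd_def)
  ultimately show "k dvd n" by (simp add: fps_support_dvd_def)
qed

lemma fps_map_of_int_euler_fps [simp]: "fps_map of_int (euler_fps k) = (euler_fps k :: 'a::comm_ring_1 fps)"
  by (simp add: euler_fps_def fps_map_of_int_infprod)

definition odd_euler_fps :: "nat \<Rightarrow> 'a::comm_ring_1 fps" where
  "odd_euler_fps k = fps_infprod (\<lambda>m. 1 + fps_X ^ (k * (2 * m - 1)))"

lemma odd_euler_fps_agree:
  assumes "k \<ge> 1" and "n \<le> N"
  shows "fps_agree n (odd_euler_fps k) (\<Prod>m\<in>{1..N}. 1 + fps_X ^ (k * (2 * m - 1)))"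
  unfolding odd_euler_fps_def
proof (rule fps_infprod_agree[OF _ assms(2)])
  fix m
  have "i \<le> i * k" for i :: nat using assms(1) by simp
  from this[of "2 * m + 1"] have "m < k * (2 * Suc m - 1)" by (simp add: mult.commute)
  then show "fps_agree m (1 + fps_X ^ (k * (2 * Suc m - 1))) (1 :: 'a fps)"
    by (auto simp: fps_agree_def)
qed

section \<open>Euler products in prime characteristic\<close>

lemma one_minus_power_CHAR:
  fixes x :: "'a::comm_ring_1"
  assumes "prime CHAR('a)"
  shows "(1 - x) ^ CHAR('a) = 1 - x ^ CHAR('a)"
proof -
  have "(1 + (- x)) ^ CHAR('a) = 1 ^ CHAR('a) + (- x) ^ CHAR('a)"
    by (rule freshmans_dream[OF assms refl])
  also have "(- x) ^ CHAR('a) = - (x ^ CHAR('a))"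
    by (rule minus_power_prime_CHAR[OF refl assms])
  finally show ?thesis by simp
qed

lemma euler_fps_power_CHAR:
  assumes "prime CHAR('a::comm_ring_1)" and "k \<ge> 1"
  shows "(euler_fps k :: 'a fps) ^ CHAR('a) = euler_fps (CHAR('a) * k)"
proof (rule fps_ext)
  fix n
  let ?p = "CHAR('a)"
  have "?p * k \<ge> 1" using assms prime_gt_0_nat by (simp add: Suc_le_eq)
  have "(1 - fps_X ^ (m * k) :: 'a fps) ^ ?p = 1 - fps_X ^ (m * (?p * k))" for m
  proof -
    have "(1 - fps_X ^ (m * k) :: 'a fps) ^ ?p = 1 - (fps_X ^ (m * k)) ^ ?p"
      using one_minus_power_CHAR[where 'a="'a fps"] assms(1) by simp
    also have "(fps_X ^ (m * k)) ^ ?p = (fps_X ^ (m * (?p * k)) :: 'a fps)"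
      by (simp flip: power_mult add: ac_simps)
    finally show ?thesis .
  qed
  then have trunc: "(\<Prod>m\<in>{1..n}. 1 - fps_X ^ (m * k) :: 'a fps) ^ ?p
               = (\<Prod>m\<in>{1..n}. 1 - fps_X ^ (m * (?p * k)))"
    by (simp add: prod_power_distrib)
  have "fps_agree n (euler_fps k ^ ?p) ((\<Prod>m\<in>{1..n}. 1 - fps_X ^ (m * k) :: 'a fps) ^ ?p)"
    using assms by (intro fps_agree_power euler_fps_agree) auto
  moreover have "fps_agree n (euler_fps (?p * k)) (\<Prod>m\<in>{1..n}. 1 - fps_X ^ (m * (?p * k)) :: 'a fps)"
    using \<open>?p * k \<ge> 1\<close> by (intro euler_fps_agree) auto
  ultimately show "(euler_fps k ^ ?p :: 'a fps) $ n = euler_fps (?p * k) $ n"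
    unfolding trunc by (auto dest!: fps_agree_nth)
qed

section \<open>The product of the odd factors\<close>

lemma prod_atLeast1_double:
  fixes n :: nat
  shows "(\<Prod>m\<in>{1..2 * n}. g m) = (\<Prod>m\<in>{1..n}. g (2 * m - 1)) * (\<Prod>m\<in>{1..n}. g (2 * m))"
  by (induction n) (simp_all add: prod.nat_ivl_Suc' ac_simps)

lemma odd_euler_euler_trunc:
  fixes k n :: nat
  defines "P \<equiv> \<lambda>d N. (\<Prod>m\<in>{1..N}. 1 - fps_X ^ (m * d) :: 'a::comm_ring_1 fps)"
  shows "(\<Prod>m\<in>{1..n}. 1 + fps_X ^ (k * (2 * m - 1))) * P k (2 * n) * P (4 * k) n
           = P (2 * k) n * P (2 * k) (2 * n)"
proof -
  let ?odd = "\<lambda>d. \<Prod>m\<in>{1..n}. 1 - fps_X ^ ((2 * m - 1) * d) :: 'a fps"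
  have "(1 + fps_X ^ (k * (2 * m - 1))) * (1 - fps_X ^ ((2 * m - 1) * k))
          = (1 - fps_X ^ ((2 * m - 1) * (2 * k)) :: 'a fps)" for m
    by (simp add: algebra_simps power_mult_distrib flip: power_add power_mult)
  then have "(\<Prod>m\<in>{1..n}. 1 + fps_X ^ (k * (2 * m - 1))) * ?odd k = ?odd (2 * k)"
    by (simp flip: prod.distrib)
  moreover have "P k (2 * n) = ?odd k * P (2 * k) n"
    and "P (2 * k) (2 * n) = ?odd (2 * k) * P (4 * k) n"
    unfolding P_def prod_atLeast1_double by (simp_all add: ac_simps)
  ultimately show ?thesis by (simp add: ac_simps)
qed

lemma odd_euler_fps_mult_euler_fps:
  assumes "k \<ge> 1"
  shows "odd_euler_fps k * euler_fps k * euler_fps (4 * k) = (euler_fps (2 * k) ^ 2 :: 'a::comm_ring_1 fps)"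
proof (rule fps_ext)
  fix n
  have "fps_agree n (odd_euler_fps k * euler_fps k * euler_fps (4 * k))
          ((\<Prod>m\<in>{1..n}. 1 + fps_X ^ (k * (2 * m - 1))) * (\<Prod>m\<in>{1..2 * n}. 1 - fps_X ^ (m * k))
             * (\<Prod>m\<in>{1..n}. 1 - fps_X ^ (m * (4 * k))) :: 'a fps)"
    using assms by (intro fps_agree_mult odd_euler_fps_agree euler_fps_agree) auto
  moreover have "fps_agree n (euler_fps (2 * k) ^ 2)
          ((\<Prod>m\<in>{1..n}. 1 - fps_X ^ (m * (2 * k))) * (\<Prod>m\<in>{1..2 * n}. 1 - fps_X ^ (m * (2 * k))) :: 'a fps)"
    unfolding power2_eq_square using assms by (intro fps_agree_mult euler_fps_agree) auto
  ultimately show "(odd_euler_fps k * euler_fps k * euler_fps (4 * k) :: 'a fps) $ n = (euler_fps (2 * k) ^ 2) $ n"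
    using odd_euler_euler_trunc[of k n, where 'a='a] by (auto dest!: fps_agree_nth)
qed

section \<open>Gaussian binomial coefficients\<close>

fun qbinom :: "'a::comm_ring_1 \<Rightarrow> nat \<Rightarrow> nat \<Rightarrow> 'a" where
  "qbinom p M 0 = 1"
| "qbinom p 0 (Suc i) = 0"
| "qbinom p (Suc M) (Suc i) = qbinom p M (Suc i) + p ^ (M - i) * qbinom p M i"

lemma qbinom_eq_0: "M < i \<Longrightarrow> qbinom p M i = 0"
  by (induction p M i rule: qbinom.induct) auto

lemma Suc_choose_two: "Suc i choose 2 = (i choose 2) + i"
  by (simp add: numeral_2_eq_2)

theorem q_binomial:
  fixes p y :: "'a::comm_ring_1"
  shows "(\<Prod>j<M. y + p ^ j) = (\<Sum>i\<le>M. qbinom p M i * p ^ (i choose 2) * y ^ (M - i))"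
proof (induction M)
  case (Suc M)
  define S where "S = (\<Sum>i\<le>M. qbinom p M i * p ^ (i choose 2) * y ^ (M - i))"
  have Sy: "S * y = y ^ Suc M + (\<Sum>i\<le>M. qbinom p M (Suc i) * p ^ (Suc i choose 2) * y ^ (M - i))"
  proof -
    have "S * y = (\<Sum>i\<le>M. qbinom p M i * p ^ (i choose 2) * y ^ (Suc M - i))"
      unfolding S_def sum_distrib_right by (intro sum.cong refl) (simp add: Suc_diff_le)
    also have "\<dots> = (\<Sum>i\<le>Suc M. qbinom p M i * p ^ (i choose 2) * y ^ (Suc M - i))"
      by (simp add: qbinom_eq_0)
    also have "\<dots> = y ^ Suc M + (\<Sum>i\<le>M. qbinom p M (Suc i) * p ^ (Suc i choose 2) * y ^ (M - i))"
      by (simp only: sum.atMost_Suc_shift) (simp add: numeral_2_eq_2)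
    finally show ?thesis .
  qed
  have Sp: "S * p ^ M = (\<Sum>i\<le>M. p ^ (M - i) * qbinom p M i * p ^ (Suc i choose 2) * y ^ (M - i))"
    unfolding S_def sum_distrib_right
  proof (intro sum.cong refl)
    fix i assume "i \<in> {..M}"
    then have "(i choose 2) + M = (M - i) + (Suc i choose 2)"
      by (simp add: Suc_choose_two)
    then have pow: "p ^ (i choose 2) * p ^ M = p ^ (M - i) * p ^ (Suc i choose 2)"
      by (simp flip: power_add)
    have "qbinom p M i * p ^ (i choose 2) * y ^ (M - i) * p ^ M
            = qbinom p M i * y ^ (M - i) * (p ^ (i choose 2) * p ^ M)"
      by (simp add: ac_simps)
    also have "\<dots> = p ^ (M - i) * qbinom p M i * p ^ (Suc i choose 2) * y ^ (M - i)"
      unfolding pow by (simp add: ac_simps)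
    finally show "qbinom p M i * p ^ (i choose 2) * y ^ (M - i) * p ^ M
                 = p ^ (M - i) * qbinom p M i * p ^ (Suc i choose 2) * y ^ (M - i)" .
  qed
  have "(\<Sum>i\<le>Suc M. qbinom p (Suc M) i * p ^ (i choose 2) * y ^ (Suc M - i))
          = y ^ Suc M + (\<Sum>i\<le>M. qbinom p (Suc M) (Suc i) * p ^ (Suc i choose 2) * y ^ (M - i))"
    by (simp only: sum.atMost_Suc_shift) (simp add: numeral_2_eq_2)
  also have "\<dots> = S * y + S * p ^ M"
    unfolding Sy Sp by (simp add: sum.distrib algebra_simps)
  also have "\<dots> = (\<Prod>j<Suc M. y + p ^ j)"
    using Suc.IH by (simp add: S_def algebra_simps)
  finally show ?case ..
qed (simp add: numeral_2_eq_2)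

definition qpoch :: "'a::comm_ring_1 \<Rightarrow> nat \<Rightarrow> 'a" where
  "qpoch p a = (\<Prod>j\<in>{1..a}. 1 - p ^ j)"

lemma qpoch_Suc: "qpoch p (Suc a) = qpoch p a * (1 - p ^ Suc a)"
  by (simp add: qpoch_def prod.nat_ivl_Suc')

lemma qpoch_mult_qbinom:
  "i \<le> M \<Longrightarrow> qpoch p i * qpoch p (M - i) * qbinom p M i = qpoch p M"
proof (induction M arbitrary: i)
  case (Suc M)
  show ?case
  proof (cases i)
    case (Suc j)
    with Suc.prems have "j \<le> M" by simp
    have left: "qpoch p (Suc j) * qpoch p (M - j) * qbinom p M (Suc j) = (1 - p ^ (M - j)) * qpoch p M"
    proof (cases "j = M")
      case False
      with \<open>j \<le> M\<close> have "Suc j \<le> M" and "M - j = Suc (M - Suc j)" by auto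
      then have "qpoch p (Suc j) * qpoch p (M - j) * qbinom p M (Suc j)
                   = (1 - p ^ (M - j)) * (qpoch p (Suc j) * qpoch p (M - Suc j) * qbinom p M (Suc j))"
        by (simp add: qpoch_Suc ac_simps del: power_Suc)
      then show ?thesis using Suc.IH[OF \<open>Suc j \<le> M\<close>] by simp
    qed (simp add: qbinom_eq_0)
    have right: "qpoch p (Suc j) * qpoch p (M - j) * (p ^ (M - j) * qbinom p M j)
                   = (1 - p ^ Suc j) * p ^ (M - j) * qpoch p M"
      using Suc.IH[OF \<open>j \<le> M\<close>, symmetric] by (simp add: qpoch_Suc ac_simps del: power_Suc)
    have "Suc j + (M - j) = Suc M" using \<open>j \<le> M\<close> by simp
    then have "p ^ Suc j * p ^ (M - j) = p ^ Suc M" by (metis power_add)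
    then have "(1 - p ^ (M - j)) * qpoch p M + (1 - p ^ Suc j) * p ^ (M - j) * qpoch p M = qpoch p (Suc M)"
      by (simp add: qpoch_Suc algebra_simps del: power_Suc)
    with left right show ?thesis
      by (simp add: Suc distrib_left del: power_Suc)
  qed (simp add: qpoch_def)
qed (simp add: qpoch_def)

section \<open>The exponents of the theta function\<close>

lemma double_choose_two_add: "2 * (n choose 2) + n = n ^ 2"
  by (induction n) (simp_all add: Suc_choose_two power2_eq_square)

lemma jacobi_exponent:
  assumes "i \<le> 2 * n" and "n \<ge> 1"
  shows "2 * (i choose 2) + (2 * n - 1) * (2 * n - i)
           = (max i n - min i n) ^ 2 + (2 * (n choose 2) + (2 * n - 1) * n)"
proof -
  have choose: "int (2 * (m choose 2)) = int m ^ 2 - int m" for m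
    using arg_cong[OF double_choose_two_add[of m], of int] by simp
  have "int (max i n - min i n) = \<bar>int i - int n\<bar>" by auto
  then have "int ((max i n - min i n) ^ 2) = (int i - int n) ^ 2" by simp
  then have "int ((max i n - min i n) ^ 2 + (2 * (n choose 2) + (2 * n - 1) * n))
               = (int i - int n) ^ 2 + (int n ^ 2 - int n) + (2 * int n - 1) * int n"
    using assms(2) choose[of n] by (simp add: of_nat_diff)
  moreover have "int (2 * (i choose 2) + (2 * n - 1) * (2 * n - i))
                   = (int i ^ 2 - int i) + (2 * int n - 1) * (2 * int n - int i)"
    using assms choose[of i] by (simp add: of_nat_diff)
  ultimately show ?thesis
    by (simp add: power2_eq_square algebra_simps flip: of_nat_eq_iff)
qed

lemma shifted_odd_euler_trunc_square:
  assumes "n \<ge> 1"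
  shows "(\<Prod>j<2 * n. fps_X ^ (k * (2 * n - 1)) + (fps_X ^ (2 * k)) ^ j)
           = fps_X ^ (k * (2 * (n choose 2) + (2 * n - 1) * n))
               * (\<Prod>m\<in>{1..n}. 1 + fps_X ^ (k * (2 * m - 1)) :: 'a::comm_ring_1 fps) ^ 2"
proof -
  define h :: "nat \<Rightarrow> 'a fps" where "h m = 1 + fps_X ^ (k * (2 * m - 1))" for m
  define E where "E = (\<Prod>m\<in>{1..n}. h m)"
  define p :: "'a fps" where "p = fps_X ^ (2 * k)"
  define y :: "'a fps" where "y = fps_X ^ (k * (2 * n - 1))"
  have E_rev: "E = (\<Prod>j<n. h (n - j))"
    using prod.nat_diff_reindex[of "\<lambda>i. h (Suc i)" n]
    by (simp add: E_def prod.atLeast1_atMost_eq Suc_diff_Suc)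
  have low: "(\<Prod>j<n. y + p ^ j) = fps_X ^ (k * (2 * (n choose 2))) * E"
  proof -
    have "y + p ^ j = fps_X ^ (2 * k * j) * h (n - j)" if "j < n" for j
    proof -
      obtain t where "n = Suc (j + t)" using less_imp_Suc_add[OF \<open>j < n\<close>] by blast
      then have "2 * k * j + k * (2 * (n - j) - 1) = k * (2 * n - 1)"
        by (simp add: algebra_simps)
      then show ?thesis
        unfolding y_def p_def h_def by (simp add: algebra_simps flip: power_add power_mult)
    qed
    then have "(\<Prod>j<n. y + p ^ j) = (\<Prod>j<n. fps_X ^ (2 * k * j)) * E"
      by (simp add: E_rev flip: prod.distrib)
    also have "(\<Prod>j<n. fps_X ^ (2 * k * j) :: 'a fps) = fps_X ^ (k * (2 * (n choose 2)))"
      by (induction n) (simp_all add: Suc_choose_two binomial_eq_0 algebra_simps flip: power_add)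
    finally show ?thesis .
  qed
  have high: "(\<Prod>j<n. y + p ^ (n + j)) = y ^ n * E"
  proof -
    have "y + p ^ (n + j) = y * h (Suc j)" for j
    proof -
      obtain t where "n = Suc t" using assms not0_implies_Suc by fastforce
      then have "k * (2 * n - 1) + k * (2 * Suc j - 1) = 2 * k * (n + j)"
        by (simp add: algebra_simps)
      then show ?thesis
        unfolding y_def p_def h_def by (simp add: algebra_simps flip: power_add power_mult)
    qed
    then show ?thesis
      by (simp add: E_def prod.atLeast1_atMost_eq prod.distrib)
  qed
  have "(\<Prod>j<2 * n. y + p ^ j) = (\<Prod>j<n. y + p ^ j) * (\<Prod>j<n. y + p ^ (n + j))"
    using prod.atLeastLessThan_concat[of 0 n "2 * n" "\<lambda>j. y + p ^ j"]
          prod.shift_bounds_nat_ivl[of "\<lambda>j. y + p ^ j" 0 n n]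
    by (simp add: atLeast0LessThan mult_2 add.commute)
  also have "\<dots> = fps_X ^ (k * (2 * (n choose 2) + (2 * n - 1) * n)) * E ^ 2"
    unfolding low high
    by (simp add: y_def power2_eq_square add_mult_distrib2 ac_simps flip: power_add power_mult)
  finally show ?thesis unfolding y_def p_def E_def h_def .
qed

(* A finite form of Jacobi's triple product, obtained from the q-binomial theorem for
   p = X^(2k) and y = X^(k(2n-1)) after cancelling a power of X from both sides. *)
lemma odd_euler_trunc_square:
  assumes "n \<ge> 1"
  shows "(\<Prod>m\<in>{1..n}. 1 + fps_X ^ (k * (2 * m - 1)) :: 'a::comm_ring_1 fps) ^ 2
           = (\<Sum>i\<le>2 * n. qbinom (fps_X ^ (2 * k)) (2 * n) i * fps_X ^ (k * (max i n - min i n) ^ 2))"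
proof (rule fps_X_power_mult_left_cancel)
  define p :: "'a fps" where "p = fps_X ^ (2 * k)"
  define y :: "'a fps" where "y = fps_X ^ (k * (2 * n - 1))"
  define c where "c = 2 * (n choose 2) + (2 * n - 1) * n"
  have "fps_X ^ (k * c) * (\<Prod>m\<in>{1..n}. 1 + fps_X ^ (k * (2 * m - 1))) ^ 2 = (\<Prod>j<2 * n. y + p ^ j)"
    unfolding c_def p_def y_def by (rule shifted_odd_euler_trunc_square[OF assms, symmetric])
  also have "\<dots> = (\<Sum>i\<le>2 * n. qbinom p (2 * n) i * p ^ (i choose 2) * y ^ (2 * n - i))"
    by (rule q_binomial)
  also have "\<dots> = fps_X ^ (k * c) * (\<Sum>i\<le>2 * n. qbinom p (2 * n) i * fps_X ^ (k * (max i n - min i n) ^ 2))"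
    unfolding sum_distrib_left
  proof (intro sum.cong refl)
    fix i assume "i \<in> {..2 * n}"
    then have "k * (2 * (i choose 2) + (2 * n - 1) * (2 * n - i)) = k * ((max i n - min i n) ^ 2 + c)"
      using jacobi_exponent[of i n] assms unfolding c_def by simp
    then have "k * (2 * (i choose 2)) + k * (2 * n - 1) * (2 * n - i) = k * c + k * (max i n - min i n) ^ 2"
      by (simp only: add_mult_distrib2 mult.assoc add.commute)
    then have pow: "p ^ (i choose 2) * y ^ (2 * n - i) = fps_X ^ (k * c) * fps_X ^ (k * (max i n - min i n) ^ 2)"
      unfolding p_def y_def by (simp add: ac_simps flip: power_add power_mult)
    show "qbinom p (2 * n) i * p ^ (i choose 2) * y ^ (2 * n - i)
                 = fps_X ^ (k * c) * (qbinom p (2 * n) i * fps_X ^ (k * (max i n - min i n) ^ 2))"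
      unfolding mult.assoc pow by (simp add: ac_simps)
  qed
  finally show "fps_X ^ (k * c) * (\<Prod>m\<in>{1..n}. 1 + fps_X ^ (k * (2 * m - 1)) :: 'a fps) ^ 2
      = fps_X ^ (k * c) * (\<Sum>i\<le>2 * n. qbinom (fps_X ^ (2 * k)) (2 * n) i * fps_X ^ (k * (max i n - min i n) ^ 2))"
    unfolding p_def .
qed

lemma qbinom_euler_fps_agree:
  assumes "k \<ge> 1" and "i \<le> M" and "m \<le> i" and "m \<le> M - i"
  shows "fps_agree m (qbinom (fps_X ^ k) M i * euler_fps k) (1 :: 'a::comm_ring_1 fps)"
proof -
  let ?p = "fps_X ^ k :: 'a fps"
  have qpoch: "fps_agree m (qpoch ?p a) (euler_fps k)" if "m \<le> a" for a
  proof -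
    have "qpoch ?p a = (\<Prod>j\<in>{1..a}. 1 - fps_X ^ (j * k))"
      by (simp add: qpoch_def mult.commute flip: power_mult)
    then show ?thesis
      using fps_agree_sym[OF euler_fps_agree[OF assms(1) that]] by simp
  qed
  have "fps_agree m (qpoch ?p i * qpoch ?p (M - i) * qbinom ?p M i)
          (euler_fps k * euler_fps k * qbinom ?p M i)"
    using assms by (intro fps_agree_mult qpoch fps_agree_refl)
  moreover have "fps_agree m (qpoch ?p M) (euler_fps k)"
    using assms by (intro qpoch) simp
  ultimately have "fps_agree m ((qbinom ?p M i * euler_fps k) * euler_fps k) (1 * euler_fps k)"
    unfolding qpoch_mult_qbinom[OF assms(2)] by (auto simp: fps_agree_def ac_simps)
  then show ?thesis
    using euler_fps_nth_0[OF assms(1)] by (rule fps_agree_mult_cancel)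
qed

lemma odd_euler_square_support:
  assumes "k \<ge> 1" and "(odd_euler_fps k ^ 2 * euler_fps (2 * k) :: 'a::comm_ring_1 fps) $ m \<noteq> 0"
  shows "\<exists>s. m = k * s ^ 2"
proof (rule ccontr)
  assume not_square: "\<nexists>s. m = k * s ^ 2"
  (* With this n, every term of the finite triple product with k (i - n)^2 <= m
     has m <= i and m <= 2n - i. *)
  define n where "n = 2 * m + 1"
  define d where "d i = max i n - min i n" for i
  have "n \<ge> 1" by (simp add: n_def)
  let ?f = "euler_fps (2 * k) :: 'a fps"
  let ?b = "\<lambda>i. qbinom (fps_X ^ (2 * k)) (2 * n) i :: 'a fps"
  have "fps_agree m (odd_euler_fps k ^ 2 * ?f)
          ((\<Prod>m\<in>{1..n}. 1 + fps_X ^ (k * (2 * m - 1))) ^ 2 * ?f)"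
    using assms(1) unfolding n_def
    by (intro fps_agree_mult fps_agree_power odd_euler_fps_agree fps_agree_refl) auto
  also have "(\<Prod>m\<in>{1..n}. 1 + fps_X ^ (k * (2 * m - 1))) ^ 2 * ?f
               = (\<Sum>i\<le>2 * n. fps_X ^ (k * d i ^ 2) * (?b i * ?f))"
    unfolding odd_euler_trunc_square[OF \<open>n \<ge> 1\<close>] by (simp add: d_def sum_distrib_left sum_distrib_right ac_simps)
  finally have "(odd_euler_fps k ^ 2 * ?f) $ m = (\<Sum>i\<le>2 * n. (fps_X ^ (k * d i ^ 2) * (?b i * ?f)) $ m)"
    by (simp add: fps_agree_def fps_sum_nth)
  also have "\<dots> = 0"
  proof (intro sum.neutral ballI)
    fix i assume i: "i \<in> {..2 * n}"
    show "(fps_X ^ (k * d i ^ 2) * (?b i * ?f)) $ m = 0"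
    proof (cases "m < k * d i ^ 2")
      case False
      have "d i \<le> d i ^ 2" by (simp add: power2_eq_square le_square)
      also have "\<dots> \<le> k * d i ^ 2" using assms(1) by simp
      finally have "d i \<le> k * d i ^ 2" .
      with False have "d i \<le> m" by linarith
      then have "m \<le> i" and "m \<le> 2 * n - i"
        using i by (auto simp: d_def n_def max_def min_def split: if_splits)
      then have "fps_agree m (?b i * ?f) 1"
        using assms(1) i by (intro qbinom_euler_fps_agree) auto
      moreover have "m \<noteq> k * d i ^ 2" using not_square by blast
      ultimately show ?thesis
        using False by (simp add: fps_X_power_mult_nth fps_agree_def)
    qed (simp add: fps_X_power_mult_nth)
  qed
  finally show False using assms(2) by simp
qed

lemma square_mod_3_ne_2: "(s::nat) ^ 2 mod 3 \<noteq> 2"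
proof -
  have "s ^ 2 mod 3 = (s mod 3) ^ 2 mod 3" by (simp add: power_mod)
  moreover have "s mod 3 = 0 \<or> s mod 3 = 1 \<or> s mod 3 = 2" by presburger
  ultimately show ?thesis by (auto simp: power2_eq_square)
qed

lemma three_square_plus_36_ne: "3 * s ^ 2 + 36 * t \<noteq> 9 * n + (6::nat)"
proof
  assume "3 * s ^ 2 + 36 * t = 9 * n + 6"
  then have "s ^ 2 + 12 * t = 3 * n + 2" by linarith
  moreover have "\<forall>x::nat. x + 12 * t = 3 * n + 2 \<longrightarrow> x mod 3 = 2" by presburger
  ultimately show False using square_mod_3_ne_2[of s] by blast
qed

lemma theta_euler_fps_nth_9n6:
  "(odd_euler_fps 3 ^ 2 * euler_fps 6 * euler_fps 36 :: 'a::comm_ring_1 fps) $ (9 * n + 6) = 0"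
proof (rule ccontr)
  assume "(odd_euler_fps 3 ^ 2 * euler_fps 6 * euler_fps 36 :: 'a fps) $ (9 * n + 6) \<noteq> 0"
  then obtain i j where "i + j = 9 * n + 6"
    and i: "(odd_euler_fps 3 ^ 2 * euler_fps (2 * 3) :: 'a fps) $ i \<noteq> 0"
    and j: "(euler_fps 36 :: 'a fps) $ j \<noteq> 0"
    by (auto elim: fps_mult_nth_nonzero)
  from odd_euler_square_support[OF _ i] obtain s where "i = 3 * s ^ 2" by auto
  moreover from j obtain t where "j = 36 * t"
    using fps_support_dvd_euler_fps[of 36] by (auto simp: fps_support_dvd_def)
  ultimately show False using \<open>i + j = 9 * n + 6\<close> three_square_plus_36_ne by blast
qed

lemma euler_quotient_theta_char_3:
  fixes b :: "'a::comm_ring_1 fps"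
  assumes "CHAR('a) = 3" and "b * (euler_fps 1 ^ 6 * euler_fps 2 ^ 3) = euler_fps 4 ^ 3"
  shows "b * euler_fps 18 ^ 2 = odd_euler_fps 3 ^ 2 * euler_fps 6 * euler_fps 36"
proof -
  have cube: "euler_fps k ^ 3 = (euler_fps (3 * k) :: 'a fps)" if "k \<ge> 1" for k
    using euler_fps_power_CHAR[where 'a='a, of k] assms(1) that by simp
  define u :: "'a fps" where "u = euler_fps 3 ^ 2 * euler_fps 6"
  have bu: "b * u = euler_fps 12"
  proof -
    have "euler_fps 1 ^ 6 * euler_fps 2 ^ 3 = (euler_fps 1 ^ 3) ^ 2 * (euler_fps 2 ^ 3 :: 'a fps)"
      by (simp flip: power_mult)
    then show ?thesis using assms(2) by (simp add: u_def cube)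
  qed
  have "b * euler_fps 18 ^ 2 * u = euler_fps 6 ^ 6 * euler_fps 12"
  proof -
    have "b * euler_fps 18 ^ 2 * u = (b * u) * (euler_fps 6 ^ 3) ^ 2"
      by (simp add: cube[of 6] ac_simps)
    then show ?thesis by (simp add: bu ac_simps flip: power_mult)
  qed
  moreover have "odd_euler_fps 3 ^ 2 * euler_fps 6 * euler_fps 36 * u = euler_fps 6 ^ 6 * euler_fps 12"
  proof -
    have "odd_euler_fps 3 ^ 2 * euler_fps 6 * euler_fps 36 * u
            = (odd_euler_fps 3 * euler_fps 3 * euler_fps (4 * 3)) ^ 2 * euler_fps 6 ^ 2 * euler_fps 12"
      using cube[of 12] by (simp add: u_def power2_eq_square power3_eq_cube ac_simps)
    also have "odd_euler_fps 3 * euler_fps 3 * euler_fps (4 * 3) = (euler_fps 6 ^ 2 :: 'a fps)"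
      using odd_euler_fps_mult_euler_fps[of 3] by simp
    finally show ?thesis by (simp flip: power_mult power_add)
  qed
  ultimately have "b * euler_fps 18 ^ 2 * u = odd_euler_fps 3 ^ 2 * euler_fps 6 * euler_fps 36 * u"
    by (simp only:)
  moreover have "u $ 0 = 1" by (simp add: u_def fps_nth_power_0 euler_fps_nth_0)
  ultimately show ?thesis by (rule fps_mult_right_cancel_unit)
qed

lemma euler_quotient_nth_9n6_char_3:
  fixes b :: "'a::comm_ring_1 fps"
  assumes "CHAR('a) = 3" and "b * (euler_fps 1 ^ 6 * euler_fps 2 ^ 3) = euler_fps 4 ^ 3"
  shows "b $ (9 * n + 6) = 0"
proof (rule fps_nth_arith_prog_eq_0)
  show "(euler_fps 18 ^ 2 :: 'a fps) $ 0 = 1" by (simp add: fps_nth_power_0 euler_fps_nth_0)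
  show "fps_support_dvd 9 (euler_fps 18 ^ 2 :: 'a fps)"
    by (intro fps_support_dvd_power fps_support_dvd_dvd_trans[OF fps_support_dvd_euler_fps]) simp_all
  show "(b * euler_fps 18 ^ 2) $ (9 * m + 6) = 0" for m
    unfolding euler_quotient_theta_char_3[OF assms] by (rule theta_euler_fps_nth_9n6)
qed simp

lemma bt_gf_integral:
  obtains b :: "int fps"
  where "fps_map of_int b = bt_gf" and "b * (euler_fps 1 ^ 6 * euler_fps 2 ^ 3) = euler_fps 4 ^ 3"
proof -
  define D :: "int fps" where "D = euler_fps 1 ^ 6 * euler_fps 2 ^ 3"
  define D' :: "rat fps" where "D' = euler_fps 1 ^ 6 * euler_fps 2 ^ 3"
  have "D $ 0 = 1" and "D' $ 0 = 1"
    by (simp_all add: D_def D'_def fps_nth_power_0 euler_fps_nth_0)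
  define b where "b = euler_fps 4 ^ 3 * fps_right_inverse D 1"
  have "D * fps_right_inverse D 1 = 1" using \<open>D $ 0 = 1\<close> by (intro fps_right_inverse) simp
  then have bD: "b * D = euler_fps 4 ^ 3" by (simp add: b_def ac_simps)
  have "bt_gf * D' = euler_fps 4 ^ 3"
    using \<open>D' $ 0 = 1\<close> unfolding bt_gf_def D'_def f_eta_eq_euler_fps by (simp add: fps_unit_dvd)
  also have "\<dots> = fps_map of_int b * D'"
    using arg_cong[OF bD, of "fps_map of_int :: int fps \<Rightarrow> rat fps"] by (simp add: D_def D'_def)
  finally have "fps_map of_int b = bt_gf"
    using \<open>D' $ 0 = 1\<close> by (auto simp: mult_right_cancel)
  then show ?thesis using bD unfolding D_def by (rule that)
qed

theorem mainTheorem11: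
  fixes n :: nat
  shows "\<exists>z::int. bt_bar (9 * n + 6) = of_int (3 * z)"
proof -
  obtain b :: "int fps" where b: "fps_map of_int b = bt_gf"
    and bD: "b * (euler_fps 1 ^ 6 * euler_fps 2 ^ 3) = euler_fps 4 ^ 3"
    by (rule bt_gf_integral)
  have "(fps_map of_int b :: 3 fps) * (euler_fps 1 ^ 6 * euler_fps 2 ^ 3) = euler_fps 4 ^ 3"
    using arg_cong[OF bD, of "fps_map of_int :: int fps \<Rightarrow> 3 fps"] by simp
  then have "(fps_map of_int b :: 3 fps) $ (9 * n + 6) = 0"
    by (rule euler_quotient_nth_9n6_char_3[rotated]) simp
  then have "3 dvd b $ (9 * n + 6)"
    by (simp add: of_int_eq_0_iff_char_dvd)
  then obtain z where "b $ (9 * n + 6) = 3 * z" by blast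
  then have "bt_bar (9 * n + 6) = of_int (3 * z)"
    by (simp add: bt_bar_def flip: b)
  then show ?thesis ..
qed

end
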